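(* Let $x,y\in\mathbb R^d$ with $\|x\|_2\le1$, $\|y\|_2\le1$, and let $\sigma\in C^1(\mathbb R)$ satisfy $\sigma(0)=0$ and $\|\sigma'\|_\infty\le1$. Let $a\sim\mathcal N(0,1)$ and $w\sim\mathcal N(0,I_d)$. Then for any $\varepsilon>0$: (i) $X_1:=\frac1{\varepsilon^2}\sigma(\varepsilon w^\top x)\sigma(\varepsilon w^\top y)$ satisfies $\|X_1\|_{\psi_1}\le C_{\psi,d}$; (ii) $X_2:=a^2\sigma'(\varepsilon w^\top x)\sigma'(\varepsilon w^\top y)\langle x,y\rangle$ satisfies $\|X_2\|_{\psi_1}\le C_{\psi,1}$.
   Context: The sub-exponential norm of a random variable $X$ is $\|X\|_{\psi_1}:=\inf\{s>0:\mathbb E\exp(|X|/s)\le2\}$. $C_{\psi,d}$ denotes the sub-exponential norm of a chi-square random variable with $d$ degrees of freedom. *)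

theory Defs
  imports "HOL-Probability.Probability"
begin

text \<open>Sub-exponential (psi_1) norm of a random variable X on the measure space M:
  inf {s > 0. E exp(|X|/s) \<le> 2}, taken in [0,\<infinity>] (inf of the empty set is \<infinity>).\<close>
definition psi1_norm :: "'a measure \<Rightarrow> ('a \<Rightarrow> real) \<Rightarrow> ennreal" where
  "psi1_norm M X =
     (INF s \<in> {s::real. s > 0 \<and> (\<integral>\<^sup>+ \<omega>. ennreal (exp (\<bar>X \<omega>\<bar> / s)) \<partial>M) \<le> 2}. ennreal s)"

definition chi_sq_density :: "nat \<Rightarrow> real \<Rightarrow> real" where
  "chi_sq_density k x =
     (if x > 0 then x powr (real k / 2 - 1) * exp (- x / 2) / (2 powr (real k / 2) * Gamma (real k / 2))
      else 0)"

text \<open>C_{psi,d}: the psi_1 norm of a chi-square random variable with d degrees of freedom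
  (realised as the identity on the chi-square distribution).\<close>
definition C_psi :: "nat \<Rightarrow> ennreal" where
  "C_psi d = psi1_norm (density lborel (\<lambda>x. ennreal (chi_sq_density d x))) (\<lambda>x. x)"

text \<open>Density of the standard Gaussian N(0, I_d) on real^'n (d = CARD('n)).\<close>
definition std_gauss_vec_density :: "real ^ 'n \<Rightarrow> real" where
  "std_gauss_vec_density v = (\<Prod>i\<in>UNIV. std_normal_density (v $ i))"

end

theory Submission
  imports Defs
begin

text \<open>Since \<open>\<sigma>\<close> is 1-Lipschitz with \<open>\<sigma> 0 = 0\<close>, the first variable is dominated by \<open>\<parallel>w\<parallel>\<^sup>2\<close> and the
  second by \<open>a\<^sup>2\<close>, which are chi-square with \<open>d\<close> and \<open>1\<close> degrees of freedom. Their exponential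
  moments \<open>E exp (t Y)\<close> are the chi-square moments \<open>(1 - 2t) powr (-k/2)\<close>, computed as Gaussian
  and Gamma integrals. The chi-square condition \<open>E exp (\<bar>Z\<bar>/s) \<le> 2\<close> forces \<open>s > 2\<close>, and for such
  \<open>s\<close> it transfers to the dominated variable, so its \<open>\<psi>\<^sub>1\<close> norm is at most \<open>C_psi k\<close>.\<close>

abbreviation chi_sq_distr :: "nat \<Rightarrow> real measure" where
  "chi_sq_distr k \<equiv> density lborel (\<lambda>x. ennreal (chi_sq_density k x))"

lemma borel_measurable_chi_sq_density[measurable]: "chi_sq_density k \<in> borel_measurable borel"
  unfolding chi_sq_density_def by measurable

lemma chi_sq_density_nonneg: "chi_sq_density k x \<ge> 0"
  by (cases "k = 0") (auto simp: chi_sq_density_def)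

lemma nn_integral_Gamma_rescaled:
  fixes \<alpha> l :: real
  assumes \<alpha>: "\<alpha> > 0" and l: "l > 0"
  shows "(\<integral>\<^sup>+x. ennreal (indicator {0..} x * x powr (\<alpha> - 1) * exp (- l * x)) \<partial>lborel)
    = ennreal (Gamma \<alpha> / l powr \<alpha>)"
proof -
  let ?h = "\<lambda>x. indicator {0..} x * x powr (\<alpha> - 1) * exp (- l * x)"
  let ?g = "\<lambda>t::real. indicator {0..} t * t powr (\<alpha> - 1) / exp t"
  have g_rescaled: "?g (0 + l * x) = l powr (\<alpha> - 1) * ?h x" for x
    using l by (cases "x \<ge> 0") (auto simp: powr_mult exp_minus field_simps indicator_def zero_le_mult_iff)
  have "ennreal (Gamma \<alpha>) = (\<integral>\<^sup>+t. ennreal (?g t) \<partial>lborel)"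
    using Gamma_conv_nn_integral_real[OF \<alpha>] by simp
  also have "\<dots> = ennreal l * (\<integral>\<^sup>+x. ennreal (?g (0 + l * x)) \<partial>lborel)"
    using l by (subst nn_integral_real_affine[where c = l and t = 0]) auto
  also have "\<dots> = ennreal (l powr \<alpha>) * (\<integral>\<^sup>+x. ennreal (?h x) \<partial>lborel)"
  proof -
    have "(\<integral>\<^sup>+x. ennreal (?g (0 + l * x)) \<partial>lborel)
        = ennreal (l powr (\<alpha> - 1)) * (\<integral>\<^sup>+x. ennreal (?h x) \<partial>lborel)"
      unfolding g_rescaled by (simp add: ennreal_mult' nn_integral_cmult)
    moreover have "ennreal l * ennreal (l powr (\<alpha> - 1)) = ennreal (l powr \<alpha>)"
      using l by (simp add: ennreal_mult'[symmetric] powr_mult_base)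
    ultimately show ?thesis
      by (simp add: mult.assoc[symmetric])
  qed
  finally have "ennreal (Gamma \<alpha>) = ennreal (l powr \<alpha>) * (\<integral>\<^sup>+x. ennreal (?h x) \<partial>lborel)" .
  moreover have "ennreal (Gamma \<alpha> / l powr \<alpha>) = ennreal (1 / l powr \<alpha>) * ennreal (Gamma \<alpha>)"
    using l by (simp add: ennreal_mult'[symmetric])
  moreover have "ennreal (1 / l powr \<alpha>) * ennreal (l powr \<alpha>) = 1"
    using l by (simp add: ennreal_mult'[symmetric])
  ultimately show ?thesis
    by (simp add: mult.assoc[symmetric])
qed

lemma nn_integral_chi_sq_exp:
  fixes t :: real
  assumes k: "k > 0" and t: "t < 1/2"
  shows "(\<integral>\<^sup>+x. ennreal (exp (t * x)) \<partial>chi_sq_distr k) = ennreal ((1 - 2 * t) powr (- (real k / 2)))"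
proof -
  define \<alpha> where "\<alpha> = real k / 2"
  define l where "l = 1/2 - t"
  have \<alpha>: "\<alpha> > 0" and l: "l > 0"
    using k t by (simp_all add: \<alpha>_def l_def)
  define Z where "Z = 2 powr \<alpha> * Gamma \<alpha>"
  have Z: "Z > 0"
    using \<alpha> by (simp add: Z_def Gamma_real_pos)
  let ?h = "\<lambda>x. indicator {0..} x * x powr (\<alpha> - 1) * exp (- l * x)"
  have density_times_exp: "chi_sq_density k x * exp (t * x) = ?h x / Z" for x
  proof (cases "x > 0")
    case True
    have "exp (- x / 2) * exp (t * x) = exp (- l * x)"
      by (simp add: l_def exp_add[symmetric] algebra_simps)
    with True show ?thesis
      by (simp add: chi_sq_density_def Z_def \<alpha>_def)
  qed (auto simp: chi_sq_density_def indicator_def)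
  have "(\<integral>\<^sup>+x. ennreal (exp (t * x)) \<partial>chi_sq_distr k) = (\<integral>\<^sup>+x. ennreal (1 / Z) * ennreal (?h x) \<partial>lborel)"
    using Z by (subst nn_integral_density)
      (auto intro!: nn_integral_cong simp: ennreal_mult'[symmetric] density_times_exp chi_sq_density_nonneg)
  also have "\<dots> = ennreal (1 / Z) * ennreal (Gamma \<alpha> / l powr \<alpha>)"
    using nn_integral_Gamma_rescaled[OF \<alpha> l] by (simp add: nn_integral_cmult)
  also have "\<dots> = ennreal ((2 * l) powr (- \<alpha>))"
    using Z l Gamma_real_pos[OF \<alpha>] by (simp add: ennreal_mult'[symmetric] Z_def powr_mult powr_minus_divide)
  finally show ?thesis
    by (simp add: l_def \<alpha>_def)
qed

lemma nn_integral_chi_sq_exp_abs: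
  fixes s :: real
  assumes "k > 0" and "s > 2"
  shows "(\<integral>\<^sup>+x. ennreal (exp (\<bar>x\<bar> / s)) \<partial>chi_sq_distr k) = ennreal ((1 - 2 / s) powr (- (real k / 2)))"
proof -
  have "AE x in chi_sq_distr k. x > 0"
    by (subst AE_density) (auto simp: chi_sq_density_def)
  then have "AE x in chi_sq_distr k. ennreal (exp (\<bar>x\<bar> / s)) = ennreal (exp ((1 / s) * x))"
    by eventually_elim simp
  then have "(\<integral>\<^sup>+x. ennreal (exp (\<bar>x\<bar> / s)) \<partial>chi_sq_distr k) = (\<integral>\<^sup>+x. ennreal (exp ((1 / s) * x)) \<partial>chi_sq_distr k)"
    by (rule nn_integral_cong_AE)
  with assms nn_integral_chi_sq_exp[of k "1 / s"] show ?thesis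
    by simp
qed

text \<open>The chi-square exponential moment at scale \<open>s \<le> 2\<close> dominates the one at \<open>s = 32/15\<close>,
  which is \<open>4 ^ k > 2\<close>.\<close>
lemma chi_sq_exp_moment_le_2_imp_gt_2:
  fixes s :: real
  assumes k: "k > 0" and s: "s > 0"
    and le_2: "(\<integral>\<^sup>+x. ennreal (exp (\<bar>x\<bar> / s)) \<partial>chi_sq_distr k) \<le> 2"
  shows "s > 2"
proof (rule ccontr)
  assume "\<not> s > 2"
  have "(1/16::real) powr (- (real k / 2)) = (4 powr (-2)) powr (- (real k / 2))"
    by (simp add: powr_minus_divide)
  also have "\<dots> = 4 ^ k"
    by (simp add: powr_powr powr_realpow)
  finally have "ennreal (4 ^ k) = (\<integral>\<^sup>+x. ennreal (exp (\<bar>x\<bar> / (32/15))) \<partial>chi_sq_distr k)"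
    using nn_integral_chi_sq_exp_abs[of k "32/15"] k by simp
  also have "\<dots> \<le> (\<integral>\<^sup>+x. ennreal (exp (\<bar>x\<bar> / s)) \<partial>chi_sq_distr k)"
    using s \<open>\<not> s > 2\<close>
    by (intro nn_integral_mono ennreal_leI iffD2[OF exp_le_cancel_iff] divide_left_mono) auto
  also note le_2
  finally have "(4::real) ^ k \<le> 2"
    by (metis ennreal_le_iff ennreal_numeral zero_le_numeral)
  moreover have "(4::real) \<le> 4 ^ k"
    using k by (simp add: self_le_power)
  ultimately show False
    by simp
qed

lemma psi1_norm_le_C_psi:
  fixes X Y :: "'a \<Rightarrow> real"
  assumes k: "k > 0" and dominated: "\<And>\<omega>. \<bar>X \<omega>\<bar> \<le> Y \<omega>"
    and mgf_bound: "\<And>t. 0 < t \<Longrightarrow> t < 1/2 \<Longrightarrow>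
      (\<integral>\<^sup>+\<omega>. ennreal (exp (t * Y \<omega>)) \<partial>M) \<le> ennreal ((1 - 2 * t) powr (- (real k / 2)))"
  shows "psi1_norm M X \<le> C_psi k"
  unfolding C_psi_def psi1_norm_def
proof (intro INF_superset_mono subsetI)
  fix s :: real
  assume "s \<in> {s. s > 0 \<and> (\<integral>\<^sup>+x. ennreal (exp (\<bar>x\<bar> / s)) \<partial>chi_sq_distr k) \<le> 2}"
  then have s: "s > 0" and le_2: "(\<integral>\<^sup>+x. ennreal (exp (\<bar>x\<bar> / s)) \<partial>chi_sq_distr k) \<le> 2"
    by auto
  have s_gt_2: "s > 2"
    using chi_sq_exp_moment_le_2_imp_gt_2[OF k s le_2] .
  have "(\<integral>\<^sup>+\<omega>. ennreal (exp (\<bar>X \<omega>\<bar> / s)) \<partial>M) \<le> (\<integral>\<^sup>+\<omega>. ennreal (exp ((1 / s) * Y \<omega>)) \<partial>M)"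
    using s dominated by (intro nn_integral_mono ennreal_leI) (simp add: divide_right_mono)
  also have "\<dots> \<le> ennreal ((1 - 2 / s) powr (- (real k / 2)))"
    using mgf_bound[of "1 / s"] s_gt_2 by simp
  also have "\<dots> = (\<integral>\<^sup>+x. ennreal (exp (\<bar>x\<bar> / s)) \<partial>chi_sq_distr k)"
    using k s_gt_2 by (simp add: nn_integral_chi_sq_exp_abs)
  finally show "s \<in> {s. s > 0 \<and> (\<integral>\<^sup>+\<omega>. ennreal (exp (\<bar>X \<omega>\<bar> / s)) \<partial>M) \<le> 2}"
    using s le_2 by simp
qed simp

lemma nn_integral_std_normal_exp_square:
  fixes c :: real
  assumes c: "c < 1/2"
  shows "(\<integral>\<^sup>+t. ennreal (std_normal_density t * exp (c * t\<^sup>2)) \<partial>lborel)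
    = ennreal ((1 - 2 * c) powr (- (1/2)))"
proof -
  define \<sigma> where "\<sigma> = 1 / sqrt (1 - 2 * c)"
  have \<sigma>: "\<sigma> > 0" and \<sigma>_sq: "\<sigma>\<^sup>2 = 1 / (1 - 2 * c)"
    using c by (simp_all add: \<sigma>_def power_divide)
  have rescaled_normal: "std_normal_density t * exp (c * t\<^sup>2) = \<sigma> * normal_density 0 \<sigma> t" for t
  proof -
    have "sqrt (2 * pi * \<sigma>\<^sup>2) = sqrt (2 * pi) * \<sigma>"
      using \<sigma> by (simp add: real_sqrt_mult)
    moreover have "- (t - 0)\<^sup>2 / (2 * \<sigma>\<^sup>2) = - t\<^sup>2 / 2 + c * t\<^sup>2"
      using c by (simp add: \<sigma>_sq field_simps)
    ultimately show ?thesis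
      using \<sigma> by (simp add: normal_density_def std_normal_density_def exp_add[symmetric])
  qed
  have "(\<integral>\<^sup>+t. ennreal (std_normal_density t * exp (c * t\<^sup>2)) \<partial>lborel)
      = ennreal \<sigma> * (\<integral>\<^sup>+t. ennreal (normal_density 0 \<sigma> t) \<partial>lborel)"
    using \<sigma> by (simp add: rescaled_normal ennreal_mult nn_integral_cmult)
  also have "(\<integral>\<^sup>+t. ennreal (normal_density 0 \<sigma> t) \<partial>lborel) = 1"
    using \<sigma> by (subst nn_integral_eq_integral) auto
  also have "\<sigma> = (1 - 2 * c) powr (- (1/2))"
    using c by (simp add: \<sigma>_def powr_minus_divide powr_half_sqrt)
  finally show ?thesis
    by simp
qed

lemma prod_Basis_vec: "(\<Prod>b\<in>(Basis :: (real ^ 'n) set). f (v \<bullet> b)) = (\<Prod>i\<in>UNIV. f (v $ i))"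
proof -
  have Basis_eq: "(Basis :: (real ^ 'n) set) = (\<lambda>i. axis i 1) ` UNIV"
    unfolding Basis_vec_def by auto
  have "inj (\<lambda>i::'n. axis i (1::real))"
    by (auto intro!: injI simp: axis_eq_axis)
  then show ?thesis
    unfolding Basis_eq by (subst prod.reindex) (simp_all add: inner_axis)
qed

lemma nn_integral_std_gauss_vec_exp_norm_square:
  fixes t :: real
  assumes t: "t < 1/2"
  shows "(\<integral>\<^sup>+v. ennreal (exp (t * norm v ^ 2)) \<partial>density lborel (\<lambda>v. ennreal (std_gauss_vec_density (v :: real ^ 'n))))
    = ennreal ((1 - 2 * t) powr (- (real CARD('n) / 2)))"
proof -
  define f where "f x = std_normal_density x * exp (t * x\<^sup>2)" for x
  have f_nonneg: "f x \<ge> 0" for x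
    by (simp add: f_def)
  have product_form: "std_gauss_vec_density v * exp (t * norm v ^ 2) = (\<Prod>b\<in>Basis. f (v \<bullet> b))"
    for v :: "real ^ 'n"
  proof -
    have "norm v ^ 2 = (\<Sum>i\<in>UNIV. (v $ i)\<^sup>2)"
      unfolding norm_vec_def L2_set_def by (simp add: sum_nonneg)
    then have "exp (t * norm v ^ 2) = (\<Prod>i\<in>UNIV. exp (t * (v $ i)\<^sup>2))"
      by (simp add: exp_sum[symmetric] sum_distrib_left)
    moreover have "(\<Prod>b\<in>Basis. f (v \<bullet> b)) = (\<Prod>i\<in>UNIV. f (v $ i))"
      by (rule prod_Basis_vec)
    ultimately show ?thesis
      by (simp add: f_def prod.distrib std_gauss_vec_density_def)
  qed
  have "ennreal (std_gauss_vec_density v) * ennreal (exp (t * norm v ^ 2)) = (\<Prod>b\<in>Basis. ennreal (f (v \<bullet> b)))"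
    for v :: "real ^ 'n"
    by (subst ennreal_mult''[symmetric]) (simp_all add: product_form prod_ennreal f_nonneg)
  then have "(\<integral>\<^sup>+v. ennreal (exp (t * norm v ^ 2)) \<partial>density lborel (\<lambda>v. ennreal (std_gauss_vec_density (v :: real ^ 'n))))
      = (\<integral>\<^sup>+v. (\<Prod>b\<in>Basis. ennreal (f ((v :: real ^ 'n) \<bullet> b))) \<partial>lborel)"
    by (subst nn_integral_density) (simp_all add: std_gauss_vec_density_def)
  also have "\<dots> = (\<Prod>b\<in>(Basis :: (real ^ 'n) set). \<integral>\<^sup>+x. ennreal (f x) \<partial>lborel)"
    by (rule nn_integral_lborel_prod) (simp_all add: f_def)
  also have "\<dots> = ennreal ((1 - 2 * t) powr (- (1/2))) ^ CARD('n)"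
    using t by (simp add: f_def nn_integral_std_normal_exp_square)
  also have "\<dots> = ennreal ((1 - 2 * t) powr (- (real CARD('n) / 2)))"
    using t by (simp add: ennreal_power powr_power)
  finally show ?thesis .
qed

lemma abs_le_abs_if_deriv_bounded:
  fixes f f' :: "real \<Rightarrow> real"
  assumes "\<And>t. (f has_real_derivative f' t) (at t)" and "\<And>t. \<bar>f' t\<bar> \<le> 1" and "f 0 = 0"
  shows "\<bar>f u\<bar> \<le> \<bar>u\<bar>"
  using field_differentiable_bound[of UNIV f f' 1 u 0] assms by (simp add: has_field_derivative_at_within)

lemma abs_inner_le_norm_if_norm_le_1:
  fixes v z :: "'a :: real_inner"
  assumes "norm z \<le> 1"
  shows "\<bar>v \<bullet> z\<bar> \<le> norm v"
  using Cauchy_Schwarz_ineq2[of v z] assms mult_left_le[of "norm z" "norm v"] by simp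

lemma abs_scaled_product_le_norm_square:
  fixes \<sigma> :: "real \<Rightarrow> real" and v x y :: "'a :: real_inner"
  assumes \<sigma>: "\<And>u. \<bar>\<sigma> u\<bar> \<le> \<bar>u\<bar>" and "norm x \<le> 1" and "norm y \<le> 1" and \<epsilon>: "\<epsilon> > 0"
  shows "\<bar>\<sigma> (\<epsilon> * (v \<bullet> x)) * \<sigma> (\<epsilon> * (v \<bullet> y)) / \<epsilon>\<^sup>2\<bar> \<le> norm v ^ 2"
proof -
  have factor_le: "\<bar>\<sigma> (\<epsilon> * (v \<bullet> z))\<bar> \<le> \<epsilon> * norm v" if "norm z \<le> 1" for z
    using \<sigma>[of "\<epsilon> * (v \<bullet> z)"] abs_inner_le_norm_if_norm_le_1[OF that, of v] \<epsilon>
    by (simp add: abs_mult) (meson mult_left_mono less_imp_le order_trans)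
  have "\<bar>\<sigma> (\<epsilon> * (v \<bullet> x)) * \<sigma> (\<epsilon> * (v \<bullet> y))\<bar> \<le> (\<epsilon> * norm v) * (\<epsilon> * norm v)"
    unfolding abs_mult using assms by (intro mult_mono factor_le) auto
  with \<epsilon> show ?thesis
    by (simp add: abs_mult power2_eq_square field_simps)
qed

theorem lemma2:
  fixes x y :: "real ^ 'n"
    and \<sigma> \<sigma>' :: "real \<Rightarrow> real"
    and M :: "'w measure"
    and a :: "'w \<Rightarrow> real"
    and w :: "'w \<Rightarrow> real ^ 'n"
    and \<epsilon> :: real
  assumes "norm x \<le> 1" and "norm y \<le> 1"
    and "\<And>t. (\<sigma> has_real_derivative \<sigma>' t) (at t)"
    and "continuous_on UNIV \<sigma>'"
    and "\<sigma> 0 = 0"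
    and "\<And>t. \<bar>\<sigma>' t\<bar> \<le> 1"
    and "prob_space M"
    and "a \<in> measurable M lborel"
    and "distr M lborel a = density lborel (\<lambda>t. ennreal (std_normal_density t))"
    and "w \<in> measurable M lborel"
    and "distr M lborel w = density lborel (\<lambda>v. ennreal (std_gauss_vec_density v))"
    and "\<epsilon> > 0"
  shows "psi1_norm M (\<lambda>\<omega>. \<sigma> (\<epsilon> * (w \<omega> \<bullet> x)) * \<sigma> (\<epsilon> * (w \<omega> \<bullet> y)) / \<epsilon>\<^sup>2)
           \<le> C_psi CARD('n) \<and>
         psi1_norm M (\<lambda>\<omega>. (a \<omega>)\<^sup>2 * \<sigma>' (\<epsilon> * (w \<omega> \<bullet> x)) * \<sigma>' (\<epsilon> * (w \<omega> \<bullet> y)) * (x \<bullet> y))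
           \<le> C_psi 1"
proof
  have \<sigma>_le: "\<bar>\<sigma> u\<bar> \<le> \<bar>u\<bar>" for u
    using abs_le_abs_if_deriv_bounded assms(3,5,6) by blast
  show "psi1_norm M (\<lambda>\<omega>. \<sigma> (\<epsilon> * (w \<omega> \<bullet> x)) * \<sigma> (\<epsilon> * (w \<omega> \<bullet> y)) / \<epsilon>\<^sup>2) \<le> C_psi CARD('n)"
  proof (rule psi1_norm_le_C_psi[where Y = "\<lambda>\<omega>. norm (w \<omega>) ^ 2"])
    fix t :: real
    assume "0 < t" "t < 1/2"
    then show "(\<integral>\<^sup>+\<omega>. ennreal (exp (t * norm (w \<omega>) ^ 2)) \<partial>M)
        \<le> ennreal ((1 - 2 * t) powr (- (real CARD('n) / 2)))"
      using assms(10,11) nn_integral_distr[of w M lborel "\<lambda>v. ennreal (exp (t * norm v ^ 2))"]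
      by (simp add: nn_integral_std_gauss_vec_exp_norm_square)
  qed (use abs_scaled_product_le_norm_square[OF \<sigma>_le assms(1,2,12)] in auto)
  have "\<bar>\<sigma>' (\<epsilon> * (w \<omega> \<bullet> x)) * \<sigma>' (\<epsilon> * (w \<omega> \<bullet> y)) * (x \<bullet> y)\<bar> \<le> 1" for \<omega>
    using assms(6) abs_inner_le_norm_if_norm_le_1[OF assms(2), of x] assms(1)
    unfolding abs_mult by (intro mult_le_one) auto
  then have "\<bar>(a \<omega>)\<^sup>2 * \<sigma>' (\<epsilon> * (w \<omega> \<bullet> x)) * \<sigma>' (\<epsilon> * (w \<omega> \<bullet> y)) * (x \<bullet> y)\<bar> \<le> (a \<omega>)\<^sup>2" for \<omega>
    using mult_left_le[of _ "(a \<omega>)\<^sup>2"] by (simp add: abs_mult mult.assoc)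
  then show "psi1_norm M (\<lambda>\<omega>. (a \<omega>)\<^sup>2 * \<sigma>' (\<epsilon> * (w \<omega> \<bullet> x)) * \<sigma>' (\<epsilon> * (w \<omega> \<bullet> y)) * (x \<bullet> y)) \<le> C_psi 1"
  proof (rule psi1_norm_le_C_psi[where Y = "\<lambda>\<omega>. (a \<omega>)\<^sup>2", rotated])
    fix t :: real
    assume "0 < t" "t < 1/2"
    then show "(\<integral>\<^sup>+\<omega>. ennreal (exp (t * (a \<omega>)\<^sup>2)) \<partial>M) \<le> ennreal ((1 - 2 * t) powr (- (real 1 / 2)))"
      using assms(8,9) nn_integral_distr[of a M lborel "\<lambda>u. ennreal (exp (t * u\<^sup>2))"]
      by (simp add: nn_integral_density ennreal_mult''[symmetric] nn_integral_std_normal_exp_square)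
  qed simp
qed

end
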